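(* Let $(P_C)=\{(s_1,t_1),\dots,(s_k,t_k)\}$ be an $E$-unification problem with simple variable restriction, whose variables are $X\cup C$ with $X\cap C=\emptyset$, and let $\mathcal A=\mathbf F(X\cup C)/\theta$, where $\theta$ is the congruence generated by the pairs $(s_j,t_j)$, viewed as a regular subobject $\mathcal A^*$ of $\mathbf F(X)^*\times\mathbf F(C)^*\cong\mathbf F(X\cup C)^*$ in $\mathsf{Alg}^{op}_{fp}(E)$. Then the antisymmetric quotients (posetal reflections) of the preordered sets $U^{svr}_E(\mathcal A,C)$ and $U^{svr}_E(P_C)$ are isomorphic as posets.
   Context: $E$ is an equational theory in a signature $\mathcal L$ with at least one constant; $\mathbf F(Y)$ is the free $E$-algebra on a finite set $Y$, and $\mathsf{Alg}^{op}_{fp}(E)$ the opposite of the category of finitely presented $E$-algebras, with $\mathcal B^*$, $f^*$ denoting the formal duals of algebras and homomorphisms; products in it are dual to coproducts, so $\mathbf F(X)^*\times\mathbf F(C)^*\cong\mathbf F(X\cup C)^*$, and regular subobjects of $\mathcal B^*$ correspond to finitely presented quotients of $\mathcal B$. Symbolic side: a substitution $\sigma$ is $C$-invariant if $\sigma(c)=c$ for $c\in C$ and $\sigma(x)$ contains no variable from $C$ for $x\notin C$; $U^{svr}_E(P_C)$ is the set of $C$-invariant substitutions $\sigma$ with domain $Fm_{\mathcal L}(X\cup C)$ such that $\sigma(s_j)=_E\sigma(t_j)$ for all $j$ (where $=_E$ means equality provable in $E$), preordered by: $\tau\le_C\sigma$ iff $\tau=_E\theta\circ\sigma$ for some substitution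 $\theta$. Algebraic side: $U^{svr}_E(\mathcal A,C)$ is the set of homomorphisms $\sigma:\mathbf F(X)\to\mathbf F(Z)$ ($Z$ finite) such that $\sigma^*\times 1:\mathbf F(Z)^*\times\mathbf F(C)^*\to\mathbf F(X)^*\times\mathbf F(C)^*$ factors through the mono $\mathcal A^*\hookrightarrow\mathbf F(X)^*\times\mathbf F(C)^*$ (equivalently $\sigma+1:\mathbf F(X\cup C)\to\mathbf F(Z\cup C)$ factors through the quotient $\mathbf F(X\cup C)\to\mathcal A$), preordered by: $\gamma:\mathbf F(X)\to\mathbf F(W)$ is below $\sigma$ iff $k\circ\sigma=\gamma$ for some homomorphism $k:\mathbf F(Z)\to\mathbf F(W)$. *)

theory Defs
  imports Main
begin

datatype ('f, 'v) trm = Var 'v | Fn 'f "('f, 'v) trm list"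

fun vars :: "('f, 'v) trm \<Rightarrow> 'v set" where
  "vars (Var v) = {v}"
| "vars (Fn f ts) = (\<Union>t\<in>set ts. vars t)"

fun wf_trm :: "('f \<Rightarrow> nat) \<Rightarrow> ('f, 'v) trm \<Rightarrow> bool" where
  "wf_trm ar (Var v) = True"
| "wf_trm ar (Fn f ts) = (length ts = ar f \<and> (\<forall>t\<in>set ts. wf_trm ar t))"

fun subst :: "('v \<Rightarrow> ('f, 'w) trm) \<Rightarrow> ('f, 'v) trm \<Rightarrow> ('f, 'w) trm" where
  "subst \<sigma> (Var v) = \<sigma> v"
| "subst \<sigma> (Fn f ts) = Fn f (map (subst \<sigma>) ts)"

inductive eqE :: "('f \<Rightarrow> nat) \<Rightarrow> (('f, 'v) trm \<times> ('f, 'v) trm) set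
                   \<Rightarrow> ('f, 'v) trm \<Rightarrow> ('f, 'v) trm \<Rightarrow> bool"
  for ar E where
  refl: "wf_trm ar t \<Longrightarrow> eqE ar E t t"
| sym: "eqE ar E s t \<Longrightarrow> eqE ar E t s"
| trans: "eqE ar E s t \<Longrightarrow> eqE ar E t u \<Longrightarrow> eqE ar E s u"
| ax: "(l, r) \<in> E \<Longrightarrow> (\<forall>v. wf_trm ar (\<sigma> v)) \<Longrightarrow> eqE ar E (subst \<sigma> l) (subst \<sigma> r)"
| cong: "length ss = ar f \<Longrightarrow> list_all2 (eqE ar E) ss ts \<Longrightarrow> eqE ar E (Fn f ss) (Fn f ts)"

record ('f, 'a) alg =
  acarrier :: "'a set"
  aop :: "'f \<Rightarrow> 'a list \<Rightarrow> 'a"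

definition hom :: "('f \<Rightarrow> nat) \<Rightarrow> ('f, 'a) alg \<Rightarrow> ('f, 'b) alg \<Rightarrow> ('a \<Rightarrow> 'b) \<Rightarrow> bool" where
  "hom ar A B h \<longleftrightarrow> (\<forall>a\<in>acarrier A. h a \<in> acarrier B) \<and>
     (\<forall>f as. length as = ar f \<longrightarrow> set as \<subseteq> acarrier A \<longrightarrow>
        h (aop A f as) = aop B f (map h as))"

definition congruence :: "('f \<Rightarrow> nat) \<Rightarrow> ('f, 'a) alg \<Rightarrow> ('a \<times> 'a) set \<Rightarrow> bool" where
  "congruence ar A R \<longleftrightarrow> equiv (acarrier A) R \<and>
     (\<forall>f as bs. length as = ar f \<longrightarrow> list_all2 (\<lambda>a b. (a, b) \<in> R) as bs \<longrightarrow>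
        (aop A f as, aop A f bs) \<in> R)"

definition cong_gen :: "('f \<Rightarrow> nat) \<Rightarrow> ('f, 'a) alg \<Rightarrow> ('a \<times> 'a) set \<Rightarrow> ('a \<times> 'a) set" where
  "cong_gen ar A P = \<Inter>{R. congruence ar A R \<and> P \<subseteq> R}"

definition quot_alg :: "('f, 'a) alg \<Rightarrow> ('a \<times> 'a) set \<Rightarrow> ('f, 'a set) alg" where
  "quot_alg A R = \<lparr>acarrier = acarrier A // R,
     aop = (\<lambda>f cs. R `` {aop A f (map (\<lambda>c. SOME a. a \<in> c) cs)})\<rparr>"

definition quot_map :: "('a \<times> 'a) set \<Rightarrow> 'a \<Rightarrow> 'a set" where
  "quot_map R a = R `` {a}"

definition tcls :: "('f \<Rightarrow> nat) \<Rightarrow> (('f, 'v) trm \<times> ('f, 'v) trm) set \<Rightarrow> 'v set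
                    \<Rightarrow> ('f, 'v) trm \<Rightarrow> ('f, 'v) trm set" where
  "tcls ar E Y t = {u. wf_trm ar u \<and> vars u \<subseteq> Y \<and> eqE ar E t u}"

definition free_alg :: "('f \<Rightarrow> nat) \<Rightarrow> (('f, 'v) trm \<times> ('f, 'v) trm) set \<Rightarrow> 'v set
                        \<Rightarrow> ('f, ('f, 'v) trm set) alg" where
  "free_alg ar E Y = \<lparr>acarrier = {tcls ar E Y t | t. wf_trm ar t \<and> vars t \<subseteq> Y},
     aop = (\<lambda>f as. tcls ar E Y (Fn f (map (\<lambda>a. SOME t. t \<in> a) as)))\<rparr>"

text \<open>For \<open>\<sigma> : F(X) \<rightarrow> F(Z)\<close>, the coproduct map \<open>\<sigma> + 1 : F(X \<union> C) \<rightarrow> F(Z \<union> C)\<close>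
  (\<open>\<sigma>\<close> on the generators from X, identity on the generators from C).\<close>
definition plus_hom :: "('f \<Rightarrow> nat) \<Rightarrow> (('f, 'v) trm \<times> ('f, 'v) trm) set \<Rightarrow> 'v set \<Rightarrow> 'v set
     \<Rightarrow> 'v set \<Rightarrow> (('f, 'v) trm set \<Rightarrow> ('f, 'v) trm set) \<Rightarrow> ('f, 'v) trm set \<Rightarrow> ('f, 'v) trm set" where
  "plus_hom ar E X C Z \<sigma> a = tcls ar E (Z \<union> C)
     (subst (\<lambda>v. if v \<in> X then (SOME u. u \<in> \<sigma> (tcls ar E X (Var v))) else Var v)
            (SOME t. t \<in> a))"

definition theta_P where
  "theta_P ar E X C P = cong_gen ar (free_alg ar E (X \<union> C))
      {(tcls ar E (X \<union> C) s, tcls ar E (X \<union> C) t) | s t. (s, t) \<in> set P}"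

definition alg_A where
  "alg_A ar E X C P = quot_alg (free_alg ar E (X \<union> C)) (theta_P ar E X C P)"

text \<open>Algebraic side \<open>U^svr_E(\<A>, C)\<close>: pairs (Z, \<sigma>), \<open>\<sigma> : F(X) \<rightarrow> F(Z)\<close>, Z finite
  (disjoint from C, so that \<open>F(Z) + F(C) = F(Z \<union> C)\<close>), with \<open>\<sigma> + 1\<close> factoring
  through the quotient \<open>F(X \<union> C) \<rightarrow> \<A>\<close>.\<close>
definition U_alg where
  "U_alg ar E X C P = {(Z, \<sigma>). finite Z \<and> Z \<inter> C = {} \<and>
      hom ar (free_alg ar E X) (free_alg ar E Z) \<sigma> \<and>
      (\<exists>g. hom ar (alg_A ar E X C P) (free_alg ar E (Z \<union> C)) g \<and>
         (\<forall>a\<in>acarrier (free_alg ar E (X \<union> C)).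
             g (quot_map (theta_P ar E X C P) a) = plus_hom ar E X C Z \<sigma> a))}"

definition alg_le where
  "alg_le ar E X = (\<lambda>(W, \<gamma>) (Z, \<sigma>). \<exists>k. hom ar (free_alg ar E Z) (free_alg ar E W) k \<and>
      (\<forall>a\<in>acarrier (free_alg ar E X). k (\<sigma> a) = \<gamma> a))"

definition C_invariant where
  "C_invariant ar X C \<sigma> \<longleftrightarrow> (\<forall>v\<in>X \<union> C. wf_trm ar (\<sigma> v)) \<and> (\<forall>c\<in>C. \<sigma> c = Var c) \<and>
      (\<forall>x\<in>X \<union> C. x \<notin> C \<longrightarrow> vars (\<sigma> x) \<inter> C = {})"

definition U_sym where
  "U_sym ar E X C P = {\<sigma>. C_invariant ar X C \<sigma> \<and>
      (\<forall>(s, t)\<in>set P. eqE ar E (subst \<sigma> s) (subst \<sigma> t))}"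

definition sym_le where
  "sym_le ar E X C = (\<lambda>\<tau> \<sigma>. \<exists>\<theta>. (\<forall>v. wf_trm ar (\<theta> v)) \<and>
      (\<forall>v\<in>X \<union> C. eqE ar E (\<tau> v) (subst \<theta> (\<sigma> v))))"

definition pequiv :: "'a set \<Rightarrow> ('a \<Rightarrow> 'a \<Rightarrow> bool) \<Rightarrow> ('a \<times> 'a) set" where
  "pequiv A R = {(x, y). x \<in> A \<and> y \<in> A \<and> R x y \<and> R y x}"

definition cls_le :: "('a \<Rightarrow> 'a \<Rightarrow> bool) \<Rightarrow> 'a set \<Rightarrow> 'a set \<Rightarrow> bool" where
  "cls_le R a b \<longleftrightarrow> (\<exists>x\<in>a. \<exists>y\<in>b. R x y)"

definition posetal_reflections_iso ::
  "'a set \<Rightarrow> ('a \<Rightarrow> 'a \<Rightarrow> bool) \<Rightarrow> 'b set \<Rightarrow> ('b \<Rightarrow> 'b \<Rightarrow> bool) \<Rightarrow> bool" where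
  "posetal_reflections_iso A R B S \<longleftrightarrow>
     (\<exists>f. bij_betw f (A // pequiv A R) (B // pequiv B S) \<and>
        (\<forall>a\<in>A // pequiv A R. \<forall>b\<in>A // pequiv A R. cls_le R a b \<longleftrightarrow> cls_le S (f a) (f b)))"

end

theory Submission
  imports Defs
begin

text \<open>
  A homomorphism \<open>\<sigma> : F(X) \<rightarrow> F(Z)\<close> of free algebras is determined, up to \<open>E\<close>, by the
  substitution sending each generator \<open>x\<close> to a representative of \<open>\<sigma>[x]\<close>. Extended by the
  identity on \<open>C\<close>, this substitution is \<open>C\<close>-invariant, and \<open>\<sigma> + 1\<close> factors through
  \<open>\<A> = F(X \<union> C)/\<theta>\<close> exactly when it unifies the pairs of the problem. Conversely, a
  \<open>C\<close>-invariant unifier \<open>\<tau>\<close> induces a homomorphism \<open>F(X) \<rightarrow> F(Z)\<close>, with \<open>Z\<close> the finitely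
  many variables of \<open>\<tau>(X)\<close>, whose substitution is \<open>E\<close>-equal to \<open>\<tau>\<close>. A factorisation
  \<open>k \<circ> \<sigma> = \<gamma>\<close> gives the instantiation by the substitution of \<open>k\<close>, and an instantiation
  \<open>\<theta>\<close> gives a factorisation once the variables outside \<open>W\<close> are sent to a constant. Hence
  the translation is an order embedding that is surjective up to equivalence, and such a map
  induces an isomorphism of posetal reflections.
\<close>

section \<open>Posetal reflections\<close>

lemma equiv_pequiv:
  assumes "reflp_on A R" "transp_on A R"
  shows "equiv A (pequiv A R)"
  using assms unfolding pequiv_def reflp_on_def transp_on_def
  by (intro equivI) (auto simp: refl_on_def sym_def trans_def)

lemma pequiv_class_eq_iff:
  assumes "reflp_on A R" "transp_on A R" "x \<in> A" "y \<in> A"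
  shows "pequiv A R `` {x} = pequiv A R `` {y} \<longleftrightarrow> R x y \<and> R y x"
  using eq_equiv_class_iff[OF equiv_pequiv[OF assms(1,2)] assms(3,4)] assms(3,4)
  by (simp add: pequiv_def)

lemma cls_le_pequiv_class_iff:
  assumes "reflp_on A R" "transp_on A R" "x \<in> A" "y \<in> A"
  shows "cls_le R (pequiv A R `` {x}) (pequiv A R `` {y}) \<longleftrightarrow> R x y"
  using assms unfolding cls_le_def pequiv_def reflp_on_def transp_on_def by blast

context
  fixes A :: "'a set" and R :: "'a \<Rightarrow> 'a \<Rightarrow> bool"
    and B :: "'b set" and S :: "'b \<Rightarrow> 'b \<Rightarrow> bool" and F :: "'a \<Rightarrow> 'b"
  assumes refl: "reflp_on B S" and trans: "transp_on B S"
    and maps: "F ` A \<subseteq> B"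
    and embed: "\<And>x y. x \<in> A \<Longrightarrow> y \<in> A \<Longrightarrow> R x y \<longleftrightarrow> S (F x) (F y)"
begin

lemma reflp_on_embedding: "reflp_on A R"
  using refl maps embed by (auto simp: reflp_on_def)

lemma transp_on_embedding: "transp_on A R"
  using trans maps embed unfolding transp_on_def by (simp add: image_subset_iff) blast

lemma pequiv_class_eq_iff_embedding:
  "x \<in> A \<Longrightarrow> y \<in> A \<Longrightarrow>
     pequiv A R `` {x} = pequiv A R `` {y} \<longleftrightarrow> pequiv B S `` {F x} = pequiv B S `` {F y}"
  using pequiv_class_eq_iff[OF reflp_on_embedding transp_on_embedding]
    pequiv_class_eq_iff[OF refl trans] maps embed
  by (simp add: image_subset_iff)

lemma UN_pequiv_class_embedding:
  assumes "x \<in> A"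
  shows "(\<Union>y\<in>pequiv A R `` {x}. pequiv B S `` {F y}) = pequiv B S `` {F x}"
proof (rule UN_equiv_class[OF equiv_pequiv[OF reflp_on_embedding transp_on_embedding] _ assms])
  show "(\<lambda>y. pequiv B S `` {F y}) respects pequiv A R"
  proof (rule congruentI)
    fix y z assume yz: "(y, z) \<in> pequiv A R"
    then have "y \<in> A" "z \<in> A"
      by (auto simp: pequiv_def)
    moreover have "pequiv A R `` {y} = pequiv A R `` {z}"
      using equiv_pequiv[OF reflp_on_embedding transp_on_embedding] yz by (rule equiv_class_eq)
    ultimately show "pequiv B S `` {F y} = pequiv B S `` {F z}"
      using pequiv_class_eq_iff_embedding by blast
  qed
qed

lemma posetal_reflections_isoI:
  assumes dense: "\<And>b. b \<in> B \<Longrightarrow> \<exists>x\<in>A. S b (F x) \<and> S (F x) b"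
  shows "posetal_reflections_iso A R B S"
proof -
  define f where "f Q = (\<Union>y\<in>Q. pequiv B S `` {F y})" for Q
  have f_class: "f (pequiv A R `` {x}) = pequiv B S `` {F x}" if "x \<in> A" for x
    unfolding f_def using that by (rule UN_pequiv_class_embedding)
  have "inj_on f (A // pequiv A R)"
  proof (rule inj_onI)
    fix P Q assume "P \<in> A // pequiv A R" "Q \<in> A // pequiv A R" "f P = f Q"
    then obtain x y where "x \<in> A" "y \<in> A" "P = pequiv A R `` {x}" "Q = pequiv A R `` {y}"
      and "pequiv B S `` {F x} = pequiv B S `` {F y}"
      by (auto elim!: quotientE simp: f_class)
    then show "P = Q"
      using pequiv_class_eq_iff_embedding by blast
  qed
  moreover have "f ` (A // pequiv A R) = B // pequiv B S"
  proof
    show "f ` (A // pequiv A R) \<subseteq> B // pequiv B S"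
      using maps by (auto elim!: quotientE simp: f_class image_subset_iff intro!: quotientI)
    show "B // pequiv B S \<subseteq> f ` (A // pequiv A R)"
    proof
      fix Q assume "Q \<in> B // pequiv B S"
      then obtain b where b: "b \<in> B" "Q = pequiv B S `` {b}" by (auto elim: quotientE)
      then obtain x where x: "x \<in> A" "S b (F x)" "S (F x) b" using dense by blast
      then have "Q = f (pequiv A R `` {x})"
        using b maps pequiv_class_eq_iff[OF refl trans] by (auto simp: f_class)
      then show "Q \<in> f ` (A // pequiv A R)" using x by (auto intro: quotientI)
    qed
  qed
  moreover have "cls_le R P Q \<longleftrightarrow> cls_le S (f P) (f Q)"
    if "P \<in> A // pequiv A R" "Q \<in> A // pequiv A R" for P Q
    using that maps embed
    by (auto elim!: quotientE simp: f_class image_subset_iff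
        cls_le_pequiv_class_iff[OF reflp_on_embedding transp_on_embedding]
        cls_le_pequiv_class_iff[OF refl trans])
  ultimately show ?thesis
    unfolding posetal_reflections_iso_def bij_betw_def by blast
qed

end

lemma subst_subst: "subst \<theta> (subst \<sigma> t) = subst (\<lambda>v. subst \<theta> (\<sigma> v)) t"
  by (induction t) auto

lemma subst_cong: "(\<And>v. v \<in> vars t \<Longrightarrow> \<sigma> v = \<tau> v) \<Longrightarrow> subst \<sigma> t = subst \<tau> t"
  by (induction t) auto

lemma subst_Var: "subst Var t = t"
  by (induction t) (auto simp: map_idI)

lemma vars_subst: "vars (subst \<sigma> t) = (\<Union>v\<in>vars t. vars (\<sigma> v))"
  by (induction t) auto

lemma finite_vars: "finite (vars t)"
  by (induction t) auto

lemma wf_subst: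
  "wf_trm ar t \<Longrightarrow> (\<And>v. v \<in> vars t \<Longrightarrow> wf_trm ar (\<sigma> v)) \<Longrightarrow> wf_trm ar (subst \<sigma> t)"
  by (induction t) auto

lemma eqE_subst:
  assumes "\<And>v. wf_trm ar (\<theta> v)"
  shows "eqE ar E s t \<Longrightarrow> eqE ar E (subst \<theta> s) (subst \<theta> t)"
proof (induction rule: eqE.induct)
  case (refl t)
  then show ?case using assms by (auto intro!: eqE.refl wf_subst)
next
  case (ax l r \<sigma>)
  have "eqE ar E (subst (\<lambda>v. subst \<theta> (\<sigma> v)) l) (subst (\<lambda>v. subst \<theta> (\<sigma> v)) r)"
    using ax assms by (auto intro!: eqE.ax wf_subst)
  then show ?case by (simp add: subst_subst)
next
  case (cong ss f ts)
  then show ?case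
    by (auto intro!: eqE.cong simp: list_all2_map1 list_all2_map2 elim: list_all2_mono)
qed (blast intro: eqE.sym eqE.trans)+

lemma eqE_subst_pointwise:
  "wf_trm ar t \<Longrightarrow> (\<And>v. v \<in> vars t \<Longrightarrow> eqE ar E (\<sigma> v) (\<tau> v))
   \<Longrightarrow> eqE ar E (subst \<sigma> t) (subst \<tau> t)"
proof (induction t)
  case (Fn f ts)
  then show ?case
    by (auto intro!: eqE.cong list.rel_refl_strong simp: list_all2_map1 list_all2_map2) blast
qed simp

section \<open>Congruences and quotient algebras\<close>

lemma hom_carrier: "hom ar A B h \<Longrightarrow> a \<in> acarrier A \<Longrightarrow> h a \<in> acarrier B"
  unfolding hom_def by blast

lemma hom_aop:
  "hom ar A B h \<Longrightarrow> length as = ar f \<Longrightarrow> set as \<subseteq> acarrier A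
   \<Longrightarrow> h (aop A f as) = aop B f (map h as)"
  unfolding hom_def by blast

lemma congruence_Inter:
  assumes "\<R> \<noteq> {}" and cong: "\<And>R. R \<in> \<R> \<Longrightarrow> congruence ar A R"
  shows "congruence ar A (\<Inter>\<R>)"
  unfolding congruence_def
proof (intro conjI allI impI)
  have "equiv (acarrier A) R" if "R \<in> \<R>" for R
    using cong[OF that] by (simp add: congruence_def)
  then show "equiv (acarrier A) (\<Inter>\<R>)"
    using assms(1) unfolding equiv_def refl_on_def sym_def trans_def by blast
next
  fix f as bs
  assume len: "length as = ar f" and rel: "list_all2 (\<lambda>a b. (a, b) \<in> \<Inter>\<R>) as bs"
  have "(aop A f as, aop A f bs) \<in> R" if "R \<in> \<R>" for R
  proof -
    have "list_all2 (\<lambda>a b. (a, b) \<in> R) as bs"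
      using rel by (rule list_all2_mono) (use that in blast)
    then show ?thesis
      using cong[OF that] len unfolding congruence_def by blast
  qed
  then show "(aop A f as, aop A f bs) \<in> \<Inter>\<R>" by blast
qed

lemma congruence_Times:
  assumes closed: "\<And>f as. length as = ar f \<Longrightarrow> set as \<subseteq> acarrier A \<Longrightarrow> aop A f as \<in> acarrier A"
  shows "congruence ar A (acarrier A \<times> acarrier A)"
  unfolding congruence_def
proof (intro conjI allI impI)
  show "equiv (acarrier A) (acarrier A \<times> acarrier A)"
    by (rule equivI) (auto simp: refl_on_def sym_def trans_def)
next
  fix f as bs assume len: "length as = ar f"
    and rel: "list_all2 (\<lambda>a b. (a, b) \<in> acarrier A \<times> acarrier A) as bs"
  then have "set as \<subseteq> acarrier A" "set bs \<subseteq> acarrier A" "length bs = ar f"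
    by (auto simp: list_all2_conv_all_nth in_set_conv_nth)
  then show "(aop A f as, aop A f bs) \<in> acarrier A \<times> acarrier A"
    using len closed by blast
qed

lemma congruence_cong_gen:
  assumes "\<And>f as. length as = ar f \<Longrightarrow> set as \<subseteq> acarrier A \<Longrightarrow> aop A f as \<in> acarrier A"
    and "G \<subseteq> acarrier A \<times> acarrier A"
  shows "congruence ar A (cong_gen ar A G)"
proof -
  have "congruence ar A (acarrier A \<times> acarrier A)"
    by (rule congruence_Times) (rule assms(1))
  then show ?thesis
    unfolding cong_gen_def using assms(2) by (intro congruence_Inter) auto
qed

lemma subset_cong_gen: "G \<subseteq> cong_gen ar A G"
  unfolding cong_gen_def by blast

lemma cong_gen_least: "congruence ar A R \<Longrightarrow> G \<subseteq> R \<Longrightarrow> cong_gen ar A G \<subseteq> R"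
  unfolding cong_gen_def by blast

lemma congruence_kernel:
  assumes closed: "\<And>f as. length as = ar f \<Longrightarrow> set as \<subseteq> acarrier A \<Longrightarrow> aop A f as \<in> acarrier A"
    and p: "hom ar A B p"
  shows "congruence ar A {(a, b). a \<in> acarrier A \<and> b \<in> acarrier A \<and> p a = p b}"
  unfolding congruence_def
proof (intro conjI allI impI)
  show "equiv (acarrier A) {(a, b). a \<in> acarrier A \<and> b \<in> acarrier A \<and> p a = p b}"
    by (rule equivI) (auto simp: refl_on_def sym_def trans_def)
next
  fix f as bs assume len: "length as = ar f"
    and rel: "list_all2 (\<lambda>a b. (a, b) \<in> {(a, b). a \<in> acarrier A \<and> b \<in> acarrier A \<and> p a = p b}) as bs"
  then have "set as \<subseteq> acarrier A" "set bs \<subseteq> acarrier A" "length bs = ar f" "map p as = map p bs"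
    by (auto simp: list_all2_conv_all_nth in_set_conv_nth intro: nth_equalityI)
  then show "(aop A f as, aop A f bs) \<in> {(a, b). a \<in> acarrier A \<and> b \<in> acarrier A \<and> p a = p b}"
    using len closed hom_aop[OF p] by simp
qed

lemma hom_quot_alg:
  assumes cong: "congruence ar A R"
    and closed: "\<And>f as. length as = ar f \<Longrightarrow> set as \<subseteq> acarrier A \<Longrightarrow> aop A f as \<in> acarrier A"
    and p: "hom ar A B p" and resp: "\<And>a b. (a, b) \<in> R \<Longrightarrow> p a = p b"
  shows "\<exists>g. hom ar (quot_alg A R) B g \<and> (\<forall>a\<in>acarrier A. g (quot_map R a) = p a)"
proof (intro exI conjI)
  have equiv: "equiv (acarrier A) R"
    using cong by (simp add: congruence_def)
  have class_rep: "(a, some_elem (R `` {a})) \<in> R" if "a \<in> acarrier A" for a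
    using equiv_class_self[OF equiv that] some_elem_nonempty[of "R `` {a}"] by blast
  have rep_carrier: "some_elem Q \<in> acarrier A" if "Q \<in> acarrier A // R" for Q
    using that class_rep equiv_type[OF equiv] by (auto elim!: quotientE)
  show g: "\<forall>a\<in>acarrier A. p (some_elem (quot_map R a)) = p a"
    using class_rep resp unfolding quot_map_def by (simp add: eq_commute)
  show "hom ar (quot_alg A R) B (\<lambda>Q. p (some_elem Q))"
    unfolding hom_def
  proof (intro conjI allI impI ballI)
    fix Q assume "Q \<in> acarrier (quot_alg A R)"
    then show "p (some_elem Q) \<in> acarrier B"
      using hom_carrier[OF p] rep_carrier by (simp add: quot_alg_def)
  next
    fix f Qs assume len: "length Qs = ar f" and Qs: "set Qs \<subseteq> acarrier (quot_alg A R)"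
    have reps: "set (map some_elem Qs) \<subseteq> acarrier A"
      using Qs rep_carrier by (auto simp: quot_alg_def)
    have "p (some_elem (aop (quot_alg A R) f Qs)) = p (aop A f (map some_elem Qs))"
      using g closed[OF _ reps] len
      by (simp add: quot_alg_def quot_map_def some_elem_def[abs_def])
    also have "\<dots> = aop B f (map (\<lambda>Q. p (some_elem Q)) Qs)"
      using hom_aop[OF p _ reps] len by (simp add: comp_def)
    finally show "p (some_elem (aop (quot_alg A R) f Qs)) = aop B f (map (\<lambda>Q. p (some_elem Q)) Qs)" .
  qed
qed

section \<open>Free algebras and substitutions\<close>

locale free_algebras =
  fixes ar :: "'f \<Rightarrow> nat" and E :: "(('f, 'v) trm \<times> ('f, 'v) trm) set"
begin

abbreviation F :: "'v set \<Rightarrow> ('f, ('f, 'v) trm set) alg" where "F Y \<equiv> free_alg ar E Y"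
abbreviation car :: "'v set \<Rightarrow> ('f, 'v) trm set set" where "car Y \<equiv> acarrier (F Y)"
abbreviation cls :: "'v set \<Rightarrow> ('f, 'v) trm \<Rightarrow> ('f, 'v) trm set" where "cls Y \<equiv> tcls ar E Y"

lemma mem_tcls_iff: "u \<in> cls Y t \<longleftrightarrow> wf_trm ar u \<and> vars u \<subseteq> Y \<and> eqE ar E t u"
  unfolding tcls_def by simp

lemma self_in_tcls: "wf_trm ar t \<Longrightarrow> vars t \<subseteq> Y \<Longrightarrow> t \<in> cls Y t"
  by (simp add: mem_tcls_iff eqE.refl)

lemma tcls_eqI: "eqE ar E s t \<Longrightarrow> cls Y s = cls Y t"
  unfolding tcls_def by (metis eqE.sym eqE.trans)

lemma tcls_eq_iff:
  assumes "wf_trm ar t" "vars t \<subseteq> Y"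
  shows "cls Y s = cls Y t \<longleftrightarrow> eqE ar E s t"
proof
  assume "cls Y s = cls Y t"
  moreover have "t \<in> cls Y t" using assms by (rule self_in_tcls)
  ultimately show "eqE ar E s t" unfolding tcls_def by blast
qed (rule tcls_eqI)

lemma free_carrier_iff: "a \<in> car Y \<longleftrightarrow> (\<exists>t. wf_trm ar t \<and> vars t \<subseteq> Y \<and> a = cls Y t)"
  unfolding free_alg_def by auto

lemma tcls_in_free_carrier: "wf_trm ar t \<Longrightarrow> vars t \<subseteq> Y \<Longrightarrow> cls Y t \<in> car Y"
  unfolding free_carrier_iff by auto

lemma some_elem_free_carrier:
  assumes "a \<in> car Y"
  shows "wf_trm ar (some_elem a)" "vars (some_elem a) \<subseteq> Y" "cls Y (some_elem a) = a"
proof -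
  obtain t where t: "wf_trm ar t" "vars t \<subseteq> Y" "a = cls Y t"
    using assms unfolding free_carrier_iff by blast
  then have "some_elem a \<in> a"
    using self_in_tcls[OF t(1,2)] some_elem_nonempty[of a] by blast
  then show "wf_trm ar (some_elem a)" "vars (some_elem a) \<subseteq> Y"
    using t(3) by (simp_all add: mem_tcls_iff)
  from \<open>some_elem a \<in> a\<close> have "eqE ar E t (some_elem a)"
    using t(3) by (simp add: mem_tcls_iff)
  then show "cls Y (some_elem a) = a"
    using t(3) by (simp add: tcls_eqI[OF eqE.sym])
qed

lemma eqE_some_elem_tcls:
  assumes "wf_trm ar t" "vars t \<subseteq> Y"
  shows "eqE ar E t (some_elem (cls Y t))"
proof -
  have "some_elem (cls Y t) \<in> cls Y t"
    using self_in_tcls[OF assms] some_elem_nonempty[of "cls Y t"] by blast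
  then show ?thesis by (simp add: mem_tcls_iff)
qed

lemma free_aop_tcls:
  assumes "length ts = ar f" "\<forall>t\<in>set ts. wf_trm ar t \<and> vars t \<subseteq> Y"
  shows "aop (F Y) f (map (cls Y) ts) = cls Y (Fn f ts)"
proof -
  have "eqE ar E (Fn f ts) (Fn f (map (some_elem \<circ> cls Y) ts))"
    using assms by (auto intro!: eqE.cong list.rel_refl_strong simp: list_all2_map2 eqE_some_elem_tcls)
  then show ?thesis
    unfolding free_alg_def some_elem_def[abs_def] by (simp add: tcls_eqI)
qed

lemma free_aop_closed:
  assumes "length as = ar f" "set as \<subseteq> car Y"
  shows "aop (F Y) f as \<in> car Y"
proof -
  have "\<forall>a\<in>set as. wf_trm ar (some_elem a) \<and> vars (some_elem a) \<subseteq> Y"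
    using assms some_elem_free_carrier(1,2) by blast
  moreover have "aop (F Y) f as = cls Y (Fn f (map some_elem as))"
    by (simp add: free_alg_def some_elem_def[abs_def])
  ultimately show ?thesis
    using assms(1) by (fastforce intro!: tcls_in_free_carrier)
qed

definition subst_hom :: "'v set \<Rightarrow> ('v \<Rightarrow> ('f, 'v) trm) \<Rightarrow> ('f, 'v) trm set \<Rightarrow> ('f, 'v) trm set"
  where "subst_hom W \<theta> a = cls W (subst \<theta> (some_elem a))"

lemma subst_hom_tcls:
  assumes "\<And>v. wf_trm ar (\<theta> v)" "wf_trm ar t" "vars t \<subseteq> Y"
  shows "subst_hom W \<theta> (cls Y t) = cls W (subst \<theta> t)"
proof -
  have "eqE ar E (subst \<theta> t) (subst \<theta> (some_elem (cls Y t)))"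
    using assms eqE_some_elem_tcls by (blast intro: eqE_subst)
  then show ?thesis
    unfolding subst_hom_def by (rule tcls_eqI[OF eqE.sym])
qed

lemma hom_subst_hom:
  assumes wf: "\<And>v. wf_trm ar (\<theta> v)" and vars: "\<And>v. v \<in> Y \<Longrightarrow> vars (\<theta> v) \<subseteq> W"
  shows "hom ar (F Y) (F W) (subst_hom W \<theta>)"
proof -
  have subst_in: "wf_trm ar (subst \<theta> t) \<and> vars (subst \<theta> t) \<subseteq> W"
    if "wf_trm ar t" "vars t \<subseteq> Y" for t
    using that wf vars by (auto intro!: wf_subst simp: vars_subst)
  show ?thesis
    unfolding hom_def
  proof (intro conjI allI impI ballI)
    fix a assume "a \<in> car Y"
    then show "subst_hom W \<theta> a \<in> car W"
      unfolding subst_hom_def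
      by (intro tcls_in_free_carrier subst_in[THEN conjunct1] subst_in[THEN conjunct2]
          some_elem_free_carrier(1,2))
  next
    fix f as assume len: "length as = ar f" and sub: "set as \<subseteq> car Y"
    define ts where "ts = map some_elem as"
    have ts: "\<forall>t\<in>set ts. wf_trm ar t \<and> vars t \<subseteq> Y"
      unfolding ts_def using sub some_elem_free_carrier(1,2) by fastforce
    have as: "as = map (cls Y) ts"
      unfolding ts_def using sub some_elem_free_carrier(3) by (simp add: subset_iff map_idI)
    have len_ts: "length ts = ar f"
      using len by (simp add: ts_def)
    have Fn: "wf_trm ar (Fn f ts)" "vars (Fn f ts) \<subseteq> Y"
      using len_ts ts by auto
    have "subst_hom W \<theta> (aop (F Y) f as) = cls W (Fn f (map (subst \<theta>) ts))"
      using len ts by (simp add: as free_aop_tcls subst_hom_tcls[OF wf Fn])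
    also have "\<dots> = aop (F W) f (map (cls W \<circ> subst \<theta>) ts)"
      using free_aop_tcls[of "map (subst \<theta>) ts" f W] len_ts ts subst_in by simp
    also have "\<dots> = aop (F W) f (map (subst_hom W \<theta>) as)"
    proof -
      have "map (subst_hom W \<theta>) as = map (cls W \<circ> subst \<theta>) ts"
        unfolding as using ts by (auto simp: subst_hom_tcls[of \<theta>, OF wf])
      then show ?thesis by simp
    qed
    finally show "subst_hom W \<theta> (aop (F Y) f as) = aop (F W) f (map (subst_hom W \<theta>) as)" .
  qed
qed

definition subst_of_hom :: "'v set \<Rightarrow> (('f, 'v) trm set \<Rightarrow> ('f, 'v) trm set) \<Rightarrow> 'v \<Rightarrow> ('f, 'v) trm"
  where "subst_of_hom Y k v = (if v \<in> Y then some_elem (k (cls Y (Var v))) else Var v)"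

lemma subst_of_hom_outside: "v \<notin> Y \<Longrightarrow> subst_of_hom Y k v = Var v"
  unfolding subst_of_hom_def by simp

lemma
  assumes k: "hom ar (F Y) (F W) k"
  shows wf_subst_of_hom: "wf_trm ar (subst_of_hom Y k v)"
    and vars_subst_of_hom: "v \<in> Y \<Longrightarrow> vars (subst_of_hom Y k v) \<subseteq> W"
    and hom_tcls_Var: "v \<in> Y \<Longrightarrow> k (cls Y (Var v)) = cls W (subst_of_hom Y k v)"
proof -
  have "k (cls Y (Var v)) \<in> car W" if "v \<in> Y"
    using k that unfolding hom_def by (simp add: tcls_in_free_carrier)
  note some = some_elem_free_carrier[OF this]
  show "wf_trm ar (subst_of_hom Y k v)"
    using some(1) by (cases "v \<in> Y") (simp_all add: subst_of_hom_def)
  show "v \<in> Y \<Longrightarrow> vars (subst_of_hom Y k v) \<subseteq> W"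
    using some(2) by (simp add: subst_of_hom_def)
  show "v \<in> Y \<Longrightarrow> k (cls Y (Var v)) = cls W (subst_of_hom Y k v)"
    using some(3) by (simp add: subst_of_hom_def)
qed

lemma subst_of_hom_subst:
  assumes "hom ar (F Y) (F W) k" "wf_trm ar t" "vars t \<subseteq> Y"
  shows "wf_trm ar (subst (subst_of_hom Y k) t)" "vars (subst (subst_of_hom Y k) t) \<subseteq> W"
  using assms wf_subst_of_hom[OF assms(1)] vars_subst_of_hom[OF assms(1)]
  by (auto intro!: wf_subst simp: vars_subst)

lemma hom_tcls:
  assumes k: "hom ar (F Y) (F W) k"
  shows "wf_trm ar t \<Longrightarrow> vars t \<subseteq> Y \<Longrightarrow> k (cls Y t) = cls W (subst (subst_of_hom Y k) t)"
proof (induction t)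
  case (Var v)
  then show ?case using hom_tcls_Var[OF k] by simp
next
  case (Fn f ts)
  have ts: "length ts = ar f" "\<forall>t\<in>set ts. wf_trm ar t \<and> vars t \<subseteq> Y"
    using Fn.prems by auto
  have "k (cls Y (Fn f ts)) = aop (F W) f (map k (map (cls Y) ts))"
    using k ts unfolding hom_def by (simp flip: free_aop_tcls add: tcls_in_free_carrier image_subset_iff)
  also have "map k (map (cls Y) ts) = map (cls W \<circ> subst (subst_of_hom Y k)) ts"
    using Fn.IH ts by simp
  also have "aop (F W) f \<dots> = cls W (subst (subst_of_hom Y k) (Fn f ts))"
    using ts subst_of_hom_subst[OF k] by (simp add: free_aop_tcls flip: map_map)
  finally show ?case .
qed

lemma sym_le_if_eqE:
  assumes "\<And>v. v \<in> X \<union> C \<Longrightarrow> eqE ar E (\<tau> v) (\<sigma> v)"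
  shows "sym_le ar E X C \<tau> \<sigma>"
  unfolding sym_le_def using assms by (auto simp: subst_Var intro!: exI[of _ Var])

lemma vars_subst_of_hom_Un:
  assumes "hom ar (F X) (F Z) \<sigma>" "v \<in> X \<union> C"
  shows "vars (subst_of_hom X \<sigma> v) \<subseteq> Z \<union> C"
  using assms vars_subst_of_hom[OF assms(1)] by (cases "v \<in> X") (auto simp: subst_of_hom_outside)

lemma subst_subst_of_hom_Un:
  assumes "hom ar (F X) (F Z) \<sigma>" "wf_trm ar t" "vars t \<subseteq> X \<union> C"
  shows "wf_trm ar (subst (subst_of_hom X \<sigma>) t)" "vars (subst (subst_of_hom X \<sigma>) t) \<subseteq> Z \<union> C"
proof -
  have "vars (subst_of_hom X \<sigma> v) \<subseteq> Z \<union> C" if "v \<in> vars t" for v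
    using that assms(3) by (intro vars_subst_of_hom_Un[OF assms(1)]) blast
  then show "vars (subst (subst_of_hom X \<sigma>) t) \<subseteq> Z \<union> C"
    by (auto simp: vars_subst)
  show "wf_trm ar (subst (subst_of_hom X \<sigma>) t)"
    using assms(2) wf_subst_of_hom[OF assms(1)] by (rule wf_subst)
qed

lemma C_invariant_subst_of_hom:
  assumes "hom ar (F X) (F Z) \<sigma>" "Z \<inter> C = {}" "X \<inter> C = {}"
  shows "C_invariant ar X C (subst_of_hom X \<sigma>)"
  unfolding C_invariant_def
proof (intro conjI ballI impI)
  show "wf_trm ar (subst_of_hom X \<sigma> v)" for v
    by (rule wf_subst_of_hom[OF assms(1)])
  show "subst_of_hom X \<sigma> c = Var c" if "c \<in> C" for c
    using that assms(3) by (intro subst_of_hom_outside) blast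
  show "vars (subst_of_hom X \<sigma> x) \<inter> C = {}" if "x \<in> X \<union> C" "x \<notin> C" for x
    using that vars_subst_of_hom[OF assms(1)] assms(2) by blast
qed

lemma eqE_subst_of_hom_subst_hom:
  assumes "\<And>v. wf_trm ar (\<theta> v)" "\<And>v. v \<in> X \<Longrightarrow> vars (\<theta> v) \<subseteq> Z" "v \<in> X"
  shows "eqE ar E (\<theta> v) (subst_of_hom X (subst_hom Z \<theta>) v)"
proof -
  have \<sigma>: "hom ar (F X) (F Z) (subst_hom Z \<theta>)"
    using assms(1,2) by (rule hom_subst_hom)
  have "cls Z (\<theta> v) = cls Z (subst_of_hom X (subst_hom Z \<theta>) v)"
    using assms hom_tcls_Var[OF \<sigma>] subst_hom_tcls[of \<theta> "Var v" X Z] by simp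
  then show ?thesis
    using wf_subst_of_hom[OF \<sigma>] vars_subst_of_hom[OF \<sigma> assms(3)] by (simp add: tcls_eq_iff)
qed

lemma transp_sym_le:
  fixes X C :: "'v set"
  shows "transp (sym_le ar E X C)"
proof (rule transpI)
  fix \<rho> \<sigma> \<tau> assume "sym_le ar E X C \<rho> \<sigma>" "sym_le ar E X C \<sigma> \<tau>"
  then obtain \<theta>1 \<theta>2 where \<theta>: "\<And>v. wf_trm ar (\<theta>1 v)" "\<And>v. wf_trm ar (\<theta>2 v)"
    and \<rho>\<sigma>: "\<And>v. v \<in> X \<union> C \<Longrightarrow> eqE ar E (\<rho> v) (subst \<theta>1 (\<sigma> v))"
    and \<sigma>\<tau>: "\<And>v. v \<in> X \<union> C \<Longrightarrow> eqE ar E (\<sigma> v) (subst \<theta>2 (\<tau> v))"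
    unfolding sym_le_def by blast
  have "eqE ar E (\<rho> v) (subst (\<lambda>u. subst \<theta>1 (\<theta>2 u)) (\<tau> v))" if "v \<in> X \<union> C" for v
    using eqE.trans[OF \<rho>\<sigma>[OF that] eqE_subst[OF \<theta>(1) \<sigma>\<tau>[OF that]]] by (simp add: subst_subst)
  moreover have "wf_trm ar (subst \<theta>1 (\<theta>2 u))" for u
    using \<theta> by (blast intro: wf_subst)
  ultimately show "sym_le ar E X C \<rho> \<tau>"
    unfolding sym_le_def by (intro exI[of _ "\<lambda>u. subst \<theta>1 (\<theta>2 u)"]) auto
qed

lemma sym_le_if_alg_le:
  assumes \<sigma>: "hom ar (F X) (F Z) \<sigma>" and \<gamma>: "hom ar (F X) (F W) \<gamma>" and "Z \<inter> C = {}"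
    and "alg_le ar E X (W, \<gamma>) (Z, \<sigma>)"
  shows "sym_le ar E X C (subst_of_hom X \<gamma>) (subst_of_hom X \<sigma>)"
proof -
  obtain k where k: "hom ar (F Z) (F W) k" and k_\<sigma>: "\<And>a. a \<in> car X \<Longrightarrow> k (\<sigma> a) = \<gamma> a"
    using assms(4) unfolding alg_le_def by blast
  have "eqE ar E (subst_of_hom X \<gamma> v) (subst (subst_of_hom Z k) (subst_of_hom X \<sigma> v))"
    if "v \<in> X \<union> C" for v
  proof (cases "v \<in> X")
    case True
    have \<sigma>v: "wf_trm ar (subst_of_hom X \<sigma> v)" "vars (subst_of_hom X \<sigma> v) \<subseteq> Z"
      using wf_subst_of_hom[OF \<sigma>] vars_subst_of_hom[OF \<sigma> True] .
    have "cls W (subst_of_hom X \<gamma> v) = k (\<sigma> (cls X (Var v)))"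
      using True by (simp add: k_\<sigma> tcls_in_free_carrier hom_tcls_Var[OF \<gamma>])
    also have "\<dots> = cls W (subst (subst_of_hom Z k) (subst_of_hom X \<sigma> v))"
      using True \<sigma>v by (simp add: hom_tcls_Var[OF \<sigma>] hom_tcls[OF k])
    finally show ?thesis
      using subst_of_hom_subst[OF k \<sigma>v] by (simp add: tcls_eq_iff)
  next
    case False
    with that \<open>Z \<inter> C = {}\<close> have "v \<notin> Z" by blast
    with False show ?thesis
      by (simp add: subst_of_hom_outside eqE.refl)
  qed
  then show ?thesis
    unfolding sym_le_def using wf_subst_of_hom[OF k] by blast
qed

lemma alg_le_if_sym_le:
  assumes const: "ar c = 0"
    and \<sigma>: "hom ar (F X) (F Z) \<sigma>" and \<gamma>: "hom ar (F X) (F W) \<gamma>"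
    and "sym_le ar E X C (subst_of_hom X \<gamma>) (subst_of_hom X \<sigma>)"
  shows "alg_le ar E X (W, \<gamma>) (Z, \<sigma>)"
proof -
  obtain \<theta> where \<theta>: "\<And>v. wf_trm ar (\<theta> v)"
    and \<gamma>_\<theta>\<sigma>: "\<And>v. v \<in> X \<union> C \<Longrightarrow> eqE ar E (subst_of_hom X \<gamma> v) (subst \<theta> (subst_of_hom X \<sigma> v))"
    using assms(4) unfolding sym_le_def by blast
  text \<open>Sending the variables outside \<open>W\<close> to the constant \<open>c\<close> makes \<open>\<theta>\<close> a map into \<open>F(W)\<close>
    without changing its effect on \<open>subst_of_hom X \<sigma>\<close> up to \<open>E\<close>.\<close>
  define \<rho> where "\<rho> u = (if u \<in> W then Var u else Fn c [])" for u
  define \<theta>' where "\<theta>' v = subst \<rho> (\<theta> v)" for v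
  have \<rho>: "wf_trm ar (\<rho> u)" "vars (\<rho> u) \<subseteq> W" for u
    using const by (simp_all add: \<rho>_def)
  have \<theta>': "wf_trm ar (\<theta>' v)" "vars (\<theta>' v) \<subseteq> W" for v
    using \<theta> \<rho> by (auto simp: \<theta>'_def vars_subst intro!: wf_subst)
  have \<theta>'_\<sigma>: "eqE ar E (subst \<theta>' (subst_of_hom X \<sigma> v)) (subst_of_hom X \<gamma> v)" if "v \<in> X" for v
  proof -
    have "subst \<rho> (subst_of_hom X \<gamma> v) = subst Var (subst_of_hom X \<gamma> v)"
      using vars_subst_of_hom[OF \<gamma> that] by (intro subst_cong) (auto simp: \<rho>_def)
    moreover have "eqE ar E (subst \<rho> (subst_of_hom X \<gamma> v)) (subst \<theta>' (subst_of_hom X \<sigma> v))"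
      using eqE_subst[where \<theta>=\<rho>, OF \<rho>(1) \<gamma>_\<theta>\<sigma>] that by (simp add: subst_subst \<theta>'_def[abs_def])
    ultimately have "eqE ar E (subst_of_hom X \<gamma> v) (subst \<theta>' (subst_of_hom X \<sigma> v))"
      by (simp add: subst_Var)
    then show ?thesis by (rule eqE.sym)
  qed
  have "subst_hom W \<theta>' (\<sigma> a) = \<gamma> a" if "a \<in> car X" for a
  proof -
    note t = some_elem_free_carrier[OF that]
    have "subst_hom W \<theta>' (\<sigma> a) = cls W (subst \<theta>' (subst (subst_of_hom X \<sigma>) (some_elem a)))"
      using t subst_of_hom_subst[OF \<sigma> t(1,2)] \<theta>'
      by (metis hom_tcls[OF \<sigma>] subst_hom_tcls)
    also have "\<dots> = cls W (subst (subst_of_hom X \<gamma>) (some_elem a))"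
      using t \<theta>'_\<sigma> by (intro tcls_eqI) (auto simp: subst_subst intro!: eqE_subst_pointwise)
    also have "\<dots> = \<gamma> a"
      using t by (metis hom_tcls[OF \<gamma>])
    finally show ?thesis .
  qed
  moreover have "hom ar (F Z) (F W) (subst_hom W \<theta>')"
    by (rule hom_subst_hom) (use \<theta>' in auto)
  ultimately show ?thesis
    unfolding alg_le_def by blast
qed

end

section \<open>The two preorders of unifiers\<close>

locale svr_problem = free_algebras ar E
  for ar :: "'f \<Rightarrow> nat" and E :: "(('f, 'v) trm \<times> ('f, 'v) trm) set" +
  fixes X C :: "'v set" and P :: "(('f, 'v) trm \<times> ('f, 'v) trm) list"
  assumes has_constant: "\<exists>c. ar c = 0"
    and finite_X: "finite X" and disjoint: "X \<inter> C = {}"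
    and wf_P: "\<forall>(s, t)\<in>set P. wf_trm ar s \<and> wf_trm ar t \<and> vars s \<subseteq> X \<union> C \<and> vars t \<subseteq> X \<union> C"
begin

abbreviation "\<theta>\<^sub>P \<equiv> theta_P ar E X C P"

definition unifies :: "('v \<Rightarrow> ('f, 'v) trm) \<Rightarrow> bool"
  where "unifies \<tau> \<longleftrightarrow> (\<forall>(s, t)\<in>set P. eqE ar E (subst \<tau> s) (subst \<tau> t))"

lemma U_sym_eq: "U_sym ar E X C P = {\<tau>. C_invariant ar X C \<tau> \<and> unifies \<tau>}"
  unfolding U_sym_def unifies_def ..

lemma unifies_if_eqE:
  assumes "unifies \<sigma>" "\<And>v. v \<in> X \<union> C \<Longrightarrow> eqE ar E (\<sigma> v) (\<tau> v)"
  shows "unifies \<tau>"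
  unfolding unifies_def
proof (intro ballI, clarify)
  fix s t assume st: "(s, t) \<in> set P"
  then have s: "wf_trm ar s" "vars s \<subseteq> X \<union> C" and t: "wf_trm ar t" "vars t \<subseteq> X \<union> C"
    using wf_P by auto
  have "eqE ar E (subst \<sigma> s) (subst \<tau> s)" "eqE ar E (subst \<sigma> t) (subst \<tau> t)"
    using s t assms(2) by (blast intro: eqE_subst_pointwise)+
  moreover have "eqE ar E (subst \<sigma> s) (subst \<sigma> t)"
    using assms(1) st unfolding unifies_def by blast
  ultimately show "eqE ar E (subst \<tau> s) (subst \<tau> t)"
    by (meson eqE.sym eqE.trans)
qed

lemma theta_P_congruence: "congruence ar (F (X \<union> C)) \<theta>\<^sub>P"
  unfolding theta_P_def using wf_P
  by (intro congruence_cong_gen free_aop_closed) (auto intro!: tcls_in_free_carrier)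

lemma equiv_theta_P: "equiv (car (X \<union> C)) \<theta>\<^sub>P"
  using theta_P_congruence by (simp add: congruence_def)

lemma theta_P_least:
  assumes "congruence ar (F (X \<union> C)) R" "\<And>s t. (s, t) \<in> set P \<Longrightarrow> (cls (X \<union> C) s, cls (X \<union> C) t) \<in> R"
  shows "\<theta>\<^sub>P \<subseteq> R"
  unfolding theta_P_def using assms by (intro cong_gen_least) auto

lemma pair_in_theta_P:
  assumes "(s, t) \<in> set P"
  shows "(cls (X \<union> C) s, cls (X \<union> C) t) \<in> \<theta>\<^sub>P"
proof -
  have "(cls (X \<union> C) s, cls (X \<union> C) t) \<in> {(cls (X \<union> C) s, cls (X \<union> C) t) | s t. (s, t) \<in> set P}"
    using assms by blast
  then show ?thesis
    unfolding theta_P_def by (rule subsetD[OF subset_cong_gen])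
qed

lemma plus_hom_eq: "plus_hom ar E X C Z \<sigma> = subst_hom (Z \<union> C) (subst_of_hom X \<sigma>)"
  unfolding plus_hom_def subst_hom_def subst_of_hom_def some_elem_def by (rule ext) simp

lemma
  assumes \<sigma>: "hom ar (F X) (F Z) \<sigma>"
  shows hom_plus_hom: "hom ar (F (X \<union> C)) (F (Z \<union> C)) (plus_hom ar E X C Z \<sigma>)"
    and plus_hom_tcls: "wf_trm ar t \<Longrightarrow> vars t \<subseteq> X \<union> C
      \<Longrightarrow> plus_hom ar E X C Z \<sigma> (cls (X \<union> C) t) = cls (Z \<union> C) (subst (subst_of_hom X \<sigma>) t)"
  unfolding plus_hom_eq
  by (rule hom_subst_hom, rule wf_subst_of_hom[OF \<sigma>], erule vars_subst_of_hom_Un[OF \<sigma>])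
    (rule subst_hom_tcls, rule wf_subst_of_hom[OF \<sigma>])

lemma plus_hom_tcls_eq_iff:
  assumes \<sigma>: "hom ar (F X) (F Z) \<sigma>" and "(s, t) \<in> set P"
  shows "plus_hom ar E X C Z \<sigma> (cls (X \<union> C) s) = plus_hom ar E X C Z \<sigma> (cls (X \<union> C) t)
    \<longleftrightarrow> eqE ar E (subst (subst_of_hom X \<sigma>) s) (subst (subst_of_hom X \<sigma>) t)"
proof -
  have s: "wf_trm ar s" "vars s \<subseteq> X \<union> C" and t: "wf_trm ar t" "vars t \<subseteq> X \<union> C"
    using assms(2) wf_P by auto
  show ?thesis
    using subst_subst_of_hom_Un[OF \<sigma> t]
    by (simp add: plus_hom_tcls[OF \<sigma> s] plus_hom_tcls[OF \<sigma> t] tcls_eq_iff)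
qed

lemma unifies_if_plus_hom_factors:
  assumes \<sigma>: "hom ar (F X) (F Z) \<sigma>"
    and g: "\<And>a. a \<in> car (X \<union> C) \<Longrightarrow> g (quot_map \<theta>\<^sub>P a) = plus_hom ar E X C Z \<sigma> a"
  shows "unifies (subst_of_hom X \<sigma>)"
  unfolding unifies_def
proof (intro ballI, clarify)
  fix s t assume st: "(s, t) \<in> set P"
  then have "cls (X \<union> C) s \<in> car (X \<union> C)" "cls (X \<union> C) t \<in> car (X \<union> C)"
    using wf_P by (auto intro!: tcls_in_free_carrier)
  moreover have "quot_map \<theta>\<^sub>P (cls (X \<union> C) s) = quot_map \<theta>\<^sub>P (cls (X \<union> C) t)"
    unfolding quot_map_def using equiv_theta_P pair_in_theta_P[OF st] by (rule equiv_class_eq)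
  ultimately show "eqE ar E (subst (subst_of_hom X \<sigma>) s) (subst (subst_of_hom X \<sigma>) t)"
    using g plus_hom_tcls_eq_iff[OF \<sigma> st] by metis
qed

lemma plus_hom_factors_if_unifies:
  assumes \<sigma>: "hom ar (F X) (F Z) \<sigma>" and u: "unifies (subst_of_hom X \<sigma>)"
  shows "\<exists>g. hom ar (alg_A ar E X C P) (F (Z \<union> C)) g \<and>
    (\<forall>a\<in>car (X \<union> C). g (quot_map \<theta>\<^sub>P a) = plus_hom ar E X C Z \<sigma> a)"
proof -
  define K where "K = {(a, b). a \<in> car (X \<union> C) \<and> b \<in> car (X \<union> C) \<and>
    plus_hom ar E X C Z \<sigma> a = plus_hom ar E X C Z \<sigma> b}"
  have closed: "aop (F (X \<union> C)) f as \<in> car (X \<union> C)"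
    if "length as = ar f" "set as \<subseteq> car (X \<union> C)" for f as
    using that by (rule free_aop_closed)
  have "\<theta>\<^sub>P \<subseteq> K"
  proof (rule theta_P_least)
    show "congruence ar (F (X \<union> C)) K"
      unfolding K_def using closed hom_plus_hom[OF \<sigma>] by (rule congruence_kernel)
    show "(cls (X \<union> C) s, cls (X \<union> C) t) \<in> K" if st: "(s, t) \<in> set P" for s t
      using u st wf_P plus_hom_tcls_eq_iff[OF \<sigma> st]
      unfolding K_def unifies_def by (auto intro!: tcls_in_free_carrier)
  qed
  then have resp: "plus_hom ar E X C Z \<sigma> a = plus_hom ar E X C Z \<sigma> b" if "(a, b) \<in> \<theta>\<^sub>P" for a b
    using that unfolding K_def by blast
  show ?thesis
    using hom_quot_alg[OF theta_P_congruence closed hom_plus_hom[OF \<sigma>] resp]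
    unfolding alg_A_def .
qed

lemma U_alg_iff:
  "(Z, \<sigma>) \<in> U_alg ar E X C P \<longleftrightarrow>
     finite Z \<and> Z \<inter> C = {} \<and> hom ar (F X) (F Z) \<sigma> \<and> unifies (subst_of_hom X \<sigma>)"
proof -
  have "(\<exists>g. hom ar (alg_A ar E X C P) (F (Z \<union> C)) g \<and>
      (\<forall>a\<in>car (X \<union> C). g (quot_map \<theta>\<^sub>P a) = plus_hom ar E X C Z \<sigma> a))
    \<longleftrightarrow> unifies (subst_of_hom X \<sigma>)" if "hom ar (F X) (F Z) \<sigma>"
    using unifies_if_plus_hom_factors[OF that] plus_hom_factors_if_unifies[OF that] by blast
  then show ?thesis
    unfolding U_alg_def by blast
qed

lemma subst_of_hom_in_U_sym:
  "(Z, \<sigma>) \<in> U_alg ar E X C P \<Longrightarrow> subst_of_hom X \<sigma> \<in> U_sym ar E X C P"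
  unfolding U_alg_iff U_sym_eq using C_invariant_subst_of_hom disjoint by blast

lemma alg_le_iff_sym_le:
  assumes "(W, \<gamma>) \<in> U_alg ar E X C P" "(Z, \<sigma>) \<in> U_alg ar E X C P"
  shows "alg_le ar E X (W, \<gamma>) (Z, \<sigma>) \<longleftrightarrow> sym_le ar E X C (subst_of_hom X \<gamma>) (subst_of_hom X \<sigma>)"
proof -
  obtain c where c: "ar c = 0"
    using has_constant by blast
  have \<gamma>: "hom ar (F X) (F W) \<gamma>" and \<sigma>: "hom ar (F X) (F Z) \<sigma>" and "Z \<inter> C = {}"
    using assms unfolding U_alg_iff by auto
  show ?thesis
  proof
    show "sym_le ar E X C (subst_of_hom X \<gamma>) (subst_of_hom X \<sigma>)" if "alg_le ar E X (W, \<gamma>) (Z, \<sigma>)"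
      using \<sigma> \<gamma> \<open>Z \<inter> C = {}\<close> that by (rule sym_le_if_alg_le)
    show "alg_le ar E X (W, \<gamma>) (Z, \<sigma>)" if "sym_le ar E X C (subst_of_hom X \<gamma>) (subst_of_hom X \<sigma>)"
      using c \<sigma> \<gamma> that by (rule alg_le_if_sym_le)
  qed
qed

lemma reflp_on_sym_le: "reflp_on (U_sym ar E X C P) (sym_le ar E X C)"
  unfolding reflp_on_def U_sym_eq C_invariant_def by (auto intro: sym_le_if_eqE eqE.refl)

lemma ex_U_alg_equiv:
  assumes "\<tau> \<in> U_sym ar E X C P"
  shows "\<exists>Z \<sigma>. (Z, \<sigma>) \<in> U_alg ar E X C P \<and>
           sym_le ar E X C \<tau> (subst_of_hom X \<sigma>) \<and> sym_le ar E X C (subst_of_hom X \<sigma>) \<tau>"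
proof -
  have \<tau>: "C_invariant ar X C \<tau>" "unifies \<tau>"
    using assms unfolding U_sym_eq by auto
  define Z where "Z = (\<Union>x\<in>X. vars (\<tau> x))"
  define \<rho> where "\<rho> v = (if v \<in> X then \<tau> v else Var v)" for v
  define \<sigma> where "\<sigma> = subst_hom Z \<rho>"
  have \<rho>: "wf_trm ar (\<rho> v)" "v \<in> X \<Longrightarrow> vars (\<rho> v) \<subseteq> Z" for v
    using \<tau>(1) unfolding \<rho>_def Z_def C_invariant_def by auto
  have \<sigma>_hom: "hom ar (F X) (F Z) \<sigma>"
    unfolding \<sigma>_def by (rule hom_subst_hom) (use \<rho> in auto)
  have \<tau>_\<sigma>: "eqE ar E (\<tau> v) (subst_of_hom X \<sigma> v)" if "v \<in> X \<union> C" for v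
  proof (cases "v \<in> X")
    case True
    then show ?thesis
      using eqE_subst_of_hom_subst_hom[of \<rho> X Z v] \<rho> unfolding \<sigma>_def by (simp add: \<rho>_def)
  next
    case False
    then show ?thesis
      using that \<tau>(1) by (simp add: C_invariant_def subst_of_hom_outside eqE.refl)
  qed
  have "(Z, \<sigma>) \<in> U_alg ar E X C P"
    unfolding U_alg_iff
  proof (intro conjI)
    show "finite Z" unfolding Z_def using finite_X by (simp add: finite_vars)
    show "Z \<inter> C = {}" using \<tau>(1) disjoint unfolding Z_def C_invariant_def by blast
    show "unifies (subst_of_hom X \<sigma>)" using \<tau>(2) \<tau>_\<sigma> by (rule unifies_if_eqE)
  qed (fact \<sigma>_hom)
  moreover have "sym_le ar E X C \<tau> (subst_of_hom X \<sigma>)"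
    by (rule sym_le_if_eqE) (rule \<tau>_\<sigma>)
  moreover have "sym_le ar E X C (subst_of_hom X \<sigma>) \<tau>"
    by (rule sym_le_if_eqE) (rule eqE.sym[OF \<tau>_\<sigma>])
  ultimately show ?thesis by blast
qed

theorem posetal_reflections_iso_unifiers:
  "posetal_reflections_iso (U_alg ar E X C P) (alg_le ar E X) (U_sym ar E X C P) (sym_le ar E X C)"
proof (rule posetal_reflections_isoI[where F = "\<lambda>(Z, \<sigma>). subst_of_hom X \<sigma>"])
  show "reflp_on (U_sym ar E X C P) (sym_le ar E X C)" by (rule reflp_on_sym_le)
  show "transp_on (U_sym ar E X C P) (sym_le ar E X C)"
    using transp_sym_le by (rule transp_on_subset) simp
  show "(\<lambda>(Z, \<sigma>). subst_of_hom X \<sigma>) ` U_alg ar E X C P \<subseteq> U_sym ar E X C P"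
    using subst_of_hom_in_U_sym by auto
  show "alg_le ar E X x y \<longleftrightarrow>
      sym_le ar E X C ((\<lambda>(Z, \<sigma>). subst_of_hom X \<sigma>) x) ((\<lambda>(Z, \<sigma>). subst_of_hom X \<sigma>) y)"
    if "x \<in> U_alg ar E X C P" "y \<in> U_alg ar E X C P" for x y
    using that alg_le_iff_sym_le by (cases x, cases y) simp
  show "\<exists>x\<in>U_alg ar E X C P. sym_le ar E X C \<tau> ((\<lambda>(Z, \<sigma>). subst_of_hom X \<sigma>) x) \<and>
      sym_le ar E X C ((\<lambda>(Z, \<sigma>). subst_of_hom X \<sigma>) x) \<tau>"
    if \<tau>_in: "\<tau> \<in> U_sym ar E X C P" for \<tau>
  proof -
    obtain Z \<sigma> where "(Z, \<sigma>) \<in> U_alg ar E X C P"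
      "sym_le ar E X C \<tau> (subst_of_hom X \<sigma>)" "sym_le ar E X C (subst_of_hom X \<sigma>) \<tau>"
      using ex_U_alg_equiv[OF \<tau>_in] by blast
    then show ?thesis by (intro bexI[of _ "(Z, \<sigma>)"]) simp_all
  qed
qed

end

theorem mainTheorem4:
  fixes ar :: "'f \<Rightarrow> nat"
    and E :: "(('f, 'v) trm \<times> ('f, 'v) trm) set"
    and X C :: "'v set"
    and P :: "(('f, 'v) trm \<times> ('f, 'v) trm) list"
  assumes "\<exists>f. ar f = 0"
    and "infinite (UNIV :: 'v set)"
    and "\<forall>(l, r)\<in>E. wf_trm ar l \<and> wf_trm ar r"
    and "finite X" and "finite C" and "X \<inter> C = {}"
    and "\<forall>(s, t)\<in>set P. wf_trm ar s \<and> wf_trm ar t \<and> vars s \<subseteq> X \<union> C \<and> vars t \<subseteq> X \<union> C"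
  shows "posetal_reflections_iso (U_alg ar E X C P) (alg_le ar E X)
           (U_sym ar E X C P) (sym_le ar E X C)"
proof -
  interpret svr_problem ar E X C P
    using assms(1,4,6,7) by unfold_locales
  show ?thesis by (rule posetal_reflections_iso_unifiers)
qed

end
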